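(* Assume the vector variational inequality defined by $F$ and $K$ is monotone. (a) If $\mathcal{A}$ is a bounded connected component of $\mathrm{Sol}^w(F,K)$, then $S^{-1}(\mathcal{A})=\{\xi\in\Delta:S(\xi)\cap\mathcal{A}\neq\emptyset\}$ is open in the induced topology of $\Delta$. (b) If $\mathcal{A}$ is a bounded connected component of $\mathrm{Sol}^{pr}(F,K)$, then $\{\xi\in\operatorname{ri}\Delta:S(\xi)\cap\mathcal{A}\neq\emptyset\}$ is open in the induced topology of $\operatorname{ri}\Delta$.
   Context: Let $K\subset\mathbb{R}^n$ be a nonempty closed convex set and $F_1,\dots,F_m:K\to\mathbb{R}^n$ continuous functions; write $F=(F_1,\dots,F_m)$ and $F(x)(u)=(\langle F_1(x),u\rangle,\dots,\langle F_m(x),u\rangle)$. The problem is monotone if each $F_l$ is monotone on $K$: $\langle F_l(y)-F_l(x),y-x\rangle\ge0$ for all $x,y\in K$. Let $\Delta=\{\xi\in\mathbb{R}^m_+ : \sum_l\xi_l=1\}$, $\operatorname{ri}\Delta=\{\xi\in\Delta:\xi_l>0,\ l=1,\dots,m\}$, and $F_\xi=\sum_l\xi_lF_l$. For $G:K\to\mathbb{R}^n$, $\mathrm{Sol}(G,K)=\{x\in K:\langle G(x),y-x\rangle\ge0\ \forall y\in K\}$. The weak Pareto solution set $\mathrm{Sol}^w(F,K)$ is the set of $x\in K$ with $F(x)(x-y)\notin\operatorname{int}\mathbb{R}^m_+$ for all $y\in K$; it is known that $\mathrm{Sol}^w(F,K)=\bigcup_{\xi\in\Delta}\mathrm{Sol}(F_\xi,K)$.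 The proper Pareto solution set is $\mathrm{Sol}^{pr}(F,K)=\bigcup_{\xi\in\operatorname{ri}\Delta}\mathrm{Sol}(F_\xi,K)$. The basic multifunction is $S(\xi)=\mathrm{Sol}(F_\xi,K)$ for $\xi\in\Delta$. *)

theory Defs
  imports "HOL-Analysis.Analysis"
begin

text \<open>Objectives indexed by the finite type 'm (m = CARD('m)), space R^n = real^'n.
  A family F_1..F_m is a function F :: 'm => real^'n => real^'n.\<close>

definition monotone_on_K :: "(real^'n) set \<Rightarrow> (real^'n \<Rightarrow> real^'n) \<Rightarrow> bool" where
  "monotone_on_K K G \<longleftrightarrow> (\<forall>x\<in>K. \<forall>y\<in>K. inner (G y - G x) (y - x) \<ge> 0)"

definition Delta :: "(real^'m) set" where
  "Delta = {\<xi>. (\<forall>l. \<xi> $ l \<ge> 0) \<and> (\<Sum>l\<in>UNIV. \<xi> $ l) = 1}"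

definition ri_Delta :: "(real^'m) set" where
  "ri_Delta = {\<xi>\<in>Delta. \<forall>l. \<xi> $ l > 0}"

definition Fxi :: "('m::finite \<Rightarrow> real^'n \<Rightarrow> real^'n) \<Rightarrow> real^'m \<Rightarrow> real^'n \<Rightarrow> real^'n" where
  "Fxi F \<xi> x = (\<Sum>l\<in>UNIV. (\<xi> $ l) *\<^sub>R F l x)"

definition VI_Sol :: "(real^'n \<Rightarrow> real^'n) \<Rightarrow> (real^'n) set \<Rightarrow> (real^'n) set" where
  "VI_Sol G K = {x\<in>K. \<forall>y\<in>K. inner (G x) (y - x) \<ge> 0}"

text \<open>Weak Pareto solutions: F(x)(x-y) not in int R^m_+ for all y in K.\<close>
definition Sol_w :: "('m::finite \<Rightarrow> real^'n \<Rightarrow> real^'n) \<Rightarrow> (real^'n) set \<Rightarrow> (real^'n) set" where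
  "Sol_w F K = {x\<in>K. \<forall>y\<in>K. \<not> (\<forall>l. inner (F l x) (x - y) > 0)}"

definition Sol_pr :: "('m::finite \<Rightarrow> real^'n \<Rightarrow> real^'n) \<Rightarrow> (real^'n) set \<Rightarrow> (real^'n) set" where
  "Sol_pr F K = (\<Union>\<xi>\<in>ri_Delta. VI_Sol (Fxi F \<xi>) K)"

definition basicS :: "('m::finite \<Rightarrow> real^'n \<Rightarrow> real^'n) \<Rightarrow> (real^'n) set \<Rightarrow> real^'m \<Rightarrow> (real^'n) set" where
  "basicS F K \<xi> = VI_Sol (Fxi F \<xi>) K"

end

theory Submission
  imports Defs
begin

text \<open>The solution map \<open>S\<close> has convex values (Minty) and, after truncating \<open>K\<close> to a large ball
  around a point of a bounded \<open>S(\<xi>\<^sub>0)\<close>, nonempty values and a compact graph. The truncated solutions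
  at \<open>\<xi>\<^sub>0\<close> stay away from the boundary sphere, so by upper semicontinuity this also holds for \<open>\<xi>\<close>
  near \<open>\<xi>\<^sub>0\<close>, where the truncated solutions are therefore genuine solutions. Over a compact connected
  neighbourhood \<open>V\<close> of \<open>\<xi>\<^sub>0\<close> the truncated graph is compact with convex fibres, hence connected, and
  its projection to \<open>\<real>\<^sup>n\<close> is a connected set of solutions meeting \<open>S(\<xi>)\<close> for all \<open>\<xi> \<in> V\<close>. This set
  meets the component \<open>\<A>\<close>, hence lies in it, so \<open>S(\<xi>) \<inter> \<A> \<noteq> {}\<close> throughout \<open>V\<close>.\<close>

lemma variational_inequality_solvable:
  fixes G :: "'a::euclidean_space \<Rightarrow> 'a"
  assumes C: "compact C" "convex C" "C \<noteq> {}" and G: "continuous_on C G"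
  shows "\<exists>x\<in>C. \<forall>y\<in>C. inner (G x) (y - x) \<ge> 0"
proof -
  have cl: "closed C" using C by (simp add: compact_imp_closed)
  define f where "f = (\<lambda>x. closest_point C (x - G x))"
  have "continuous_on C f" unfolding f_def
    by (intro continuous_on_compose2[OF continuous_on_closest_point[OF C(2) cl C(3)]]
        continuous_intros G) auto
  moreover have "f \<in> C \<rightarrow> C" unfolding f_def using closest_point_in_set[OF cl C(3)] by auto
  ultimately obtain x where x: "x \<in> C" "f x = x" using brouwer[OF C] by metis
  show ?thesis
  proof (intro bexI[OF _ x(1)] ballI)
    fix y assume "y \<in> C"
    from closest_point_dot[OF C(2) cl this, of "x - G x"] x(2)
    show "inner (G x) (y - x) \<ge> 0" unfolding f_def by (simp add: inner_minus_left)
  qed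
qed

lemma minty_variational_inequality:
  fixes G :: "'a::real_inner \<Rightarrow> 'a"
  assumes C: "convex C" and G: "continuous_on C G" and x: "x \<in> C"
    and minty: "\<forall>y\<in>C. inner (G y) (y - x) \<ge> 0"
  shows "\<forall>y\<in>C. inner (G x) (y - x) \<ge> 0"
proof
  fix y assume y: "y \<in> C"
  define s where "s k = x + (1 / real (Suc k)) *\<^sub>R (y - x)" for k
  have sC: "s k \<in> C" for k
  proof -
    have "s k = (1 - 1 / real (Suc k)) *\<^sub>R x + (1 / real (Suc k)) *\<^sub>R y"
      unfolding s_def by (simp add: algebra_simps)
    also have "\<dots> \<in> C"
      by (rule convexD[OF C x y]) (auto simp: divide_le_eq)
    finally show ?thesis .
  qed
  have "s \<longlonglongrightarrow> x + 0 *\<^sub>R (y - x)"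
    unfolding s_def by (intro tendsto_intros LIMSEQ_inverse_real_of_nat[unfolded inverse_eq_divide])
  hence "(G \<circ> s) \<longlonglongrightarrow> G x" using G x sC unfolding continuous_on_sequentially by simp
  hence lim: "(\<lambda>k. inner (G (s k)) (y - x)) \<longlonglongrightarrow> inner (G x) (y - x)"
    by (intro tendsto_intros) (simp add: o_def)
  have "inner (G (s k)) (y - x) \<ge> 0" for k
  proof -
    have "0 \<le> inner (G (s k)) (s k - x)" using minty sC by blast
    also have "\<dots> = (1 / real (Suc k)) * inner (G (s k)) (y - x)" unfolding s_def by simp
    finally show ?thesis by (simp add: zero_le_divide_iff add_pos_nonneg)
  qed
  then show "inner (G x) (y - x) \<ge> 0" using LIMSEQ_le_const[OF lim] by blast
qed

lemma convex_variational_inequality_solutions: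
  fixes G :: "'a::real_inner \<Rightarrow> 'a"
  assumes C: "convex C" and G: "continuous_on C G"
    and mono: "\<forall>x\<in>C. \<forall>y\<in>C. inner (G y - G x) (y - x) \<ge> 0"
  shows "convex {x\<in>C. \<forall>y\<in>C. inner (G x) (y - x) \<ge> 0}"
proof -
  have "{x\<in>C. \<forall>y\<in>C. inner (G x) (y - x) \<ge> 0} = {x\<in>C. \<forall>y\<in>C. inner (G y) (y - x) \<ge> 0}"
  proof safe
    fix x y assume x: "x \<in> C" "\<forall>y\<in>C. inner (G x) (y - x) \<ge> 0" and y: "y \<in> C"
    have "inner (G y) (y - x) = inner (G y - G x) (y - x) + inner (G x) (y - x)"
      by (simp add: inner_diff_left)
    moreover have "inner (G y - G x) (y - x) \<ge> 0" using mono x y by blast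
    ultimately show "inner (G y) (y - x) \<ge> 0" using x y by simp
  next
    fix x y assume "x \<in> C" "\<forall>y\<in>C. inner (G y) (y - x) \<ge> 0" "y \<in> C"
    then show "inner (G x) (y - x) \<ge> 0" using minty_variational_inequality[OF C G] by blast
  qed
  also have "\<dots> = C \<inter> (\<Inter>y\<in>C. {x. inner (G y) x \<le> inner (G y) y})"
    by (auto simp: inner_diff_right)
  finally show ?thesis
    by (simp only:) (intro convex_Int C convex_INT convex_halfspace_le)
qed

lemma variational_inequality_local_to_global:
  fixes G :: "'a::real_inner \<Rightarrow> 'a"
  assumes C: "convex C" and w: "w \<in> C" "dist a w < R"
    and local: "\<forall>y\<in>C \<inter> cball a R. inner (G w) (y - w) \<ge> 0"
  shows "\<forall>y\<in>C. inner (G w) (y - w) \<ge> 0"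
proof
  fix y assume y: "y \<in> C"
  show "inner (G w) (y - w) \<ge> 0"
  proof (cases "y = w")
    case False
    hence ny: "norm (y - w) > 0" by simp
    define t where "t = min 1 ((R - dist a w) / norm (y - w))"
    have t: "t > 0" "t \<le> 1" using w ny by (auto simp: t_def)
    have tn: "t * norm (y - w) \<le> R - dist a w" using ny unfolding t_def
      by (metis min.cobounded2 mult.commute pos_le_divide_eq)
    define z where "z = w + t *\<^sub>R (y - w)"
    have "z = (1 - t) *\<^sub>R w + t *\<^sub>R y" unfolding z_def by (simp add: algebra_simps)
    hence zC: "z \<in> C" using convexD[OF C w(1) y] t by simp
    have "dist a z \<le> dist a w + dist w z" by (rule dist_triangle)
    also have "dist w z = t * norm (y - w)" unfolding z_def dist_norm using t by simp
    finally have "dist a z \<le> R" using tn by simp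
    hence "0 \<le> inner (G w) (z - w)" using local zC by auto
    also have "\<dots> = t * inner (G w) (y - w)" unfolding z_def by simp
    finally show ?thesis using t by (simp add: zero_le_mult_iff)
  qed simp
qed

lemma compact_Delta: "compact (Delta :: (real^'m::finite) set)"
proof -
  have "closed (Delta :: (real^'m) set)" unfolding Delta_def
    by (intro closed_Collect_all closed_Collect_conj closed_Collect_le closed_Collect_eq continuous_intros)
  moreover have "norm \<xi> \<le> 1" if "\<xi> \<in> (Delta :: (real^'m) set)" for \<xi>
  proof -
    have "norm \<xi> \<le> (\<Sum>l\<in>UNIV. \<bar>\<xi> $ l\<bar>)" by (rule norm_le_l1_cart)
    also have "\<dots> = 1" using that by (simp add: Delta_def)
    finally show ?thesis .
  qed
  ultimately show ?thesis unfolding compact_eq_bounded_closed bounded_iff by blast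
qed

lemma convex_Delta: "convex (Delta :: (real^'m::finite) set)"
proof (unfold convex_def, intro ballI allI impI)
  fix x y :: "real^'m" and u v :: real
  assume x: "x \<in> Delta" and y: "y \<in> Delta" and uv: "0 \<le> u" "0 \<le> v" "u + v = 1"
  have "(\<Sum>l\<in>UNIV. u * x $ l + v * y $ l) = u * (\<Sum>l\<in>UNIV. x $ l) + v * (\<Sum>l\<in>UNIV. y $ l)"
    by (simp add: sum.distrib sum_distrib_left)
  also have "\<dots> = 1" using x y uv by (simp add: Delta_def)
  finally show "u *\<^sub>R x + v *\<^sub>R y \<in> Delta"
    using x y uv by (simp add: Delta_def)
qed

lemma openin_ri_Delta: "openin (top_of_set Delta) (ri_Delta :: (real^'m::finite) set)"
proof -
  have "ri_Delta = Delta \<inter> (\<Inter>l. {\<xi> :: real^'m. \<xi> $ l > 0})"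
    by (auto simp: ri_Delta_def)
  moreover have "open (\<Inter>l. {\<xi> :: real^'m. \<xi> $ l > 0})"
    by (rule open_INT) (auto simp: open_halfspace_component_gt_cart)
  ultimately show ?thesis by (metis openin_open_Int)
qed

lemma continuous_on_Fxi:
  assumes "\<And>l. continuous_on K (F l)"
  shows "continuous_on K (Fxi F \<xi>)"
  unfolding Fxi_def by (intro continuous_intros assms)

lemma continuous_on_Fxi_joint:
  assumes "\<And>l. continuous_on K (F l)" and "snd ` P \<subseteq> K"
  shows "continuous_on P (\<lambda>p. Fxi F (fst p) (snd p))"
  unfolding Fxi_def
  by (intro continuous_intros continuous_on_compose2[OF assms(1) continuous_on_snd assms(2)])

lemma monotone_on_K_subset: "monotone_on_K K G \<Longrightarrow> L \<subseteq> K \<Longrightarrow> monotone_on_K L G"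
  unfolding monotone_on_K_def by blast

lemma monotone_on_K_Fxi:
  assumes "\<And>l. monotone_on_K K (F l)" and "\<And>l. \<xi> $ l \<ge> 0"
  shows "monotone_on_K K (Fxi F \<xi>)"
  unfolding monotone_on_K_def
proof (intro ballI)
  fix x y assume "x \<in> K" "y \<in> K"
  hence "inner (F l y - F l x) (y - x) \<ge> 0" for l using assms(1) unfolding monotone_on_K_def by blast
  moreover have "inner (Fxi F \<xi> y - Fxi F \<xi> x) (y - x) = (\<Sum>l\<in>UNIV. \<xi> $ l * inner (F l y - F l x) (y - x))"
    by (simp add: Fxi_def inner_sum_left inner_diff_left sum_subtractf right_diff_distrib)
  ultimately show "inner (Fxi F \<xi> y - Fxi F \<xi> x) (y - x) \<ge> 0"
    using assms(2) by (simp add: sum_nonneg)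
qed

lemma convex_basicS:
  assumes "convex K" and "\<And>l. continuous_on K (F l)" and "\<And>l. monotone_on_K K (F l)"
    and "\<And>l. \<xi> $ l \<ge> 0"
  shows "convex (basicS F K \<xi>)"
  using monotone_on_K_Fxi[OF assms(3,4)]
  unfolding basicS_def VI_Sol_def monotone_on_K_def
  by (intro convex_variational_inequality_solutions assms(1) continuous_on_Fxi assms(2))

lemma basicS_nonempty:
  assumes "compact K" "convex K" "K \<noteq> {}" and "\<And>l. continuous_on K (F l)"
  shows "basicS F K \<xi> \<noteq> {}"
  using variational_inequality_solvable[OF assms(1-3) continuous_on_Fxi[of K F, OF assms(4)]]
  unfolding basicS_def VI_Sol_def by blast

lemma basicS_subset_Sol_w:
  assumes "\<xi> \<in> Delta"
  shows "basicS F K \<xi> \<subseteq> Sol_w F K"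
proof
  fix x assume x: "x \<in> basicS F K \<xi>"
  have "\<not> (\<forall>l. inner (F l x) (x - y) > 0)" if y: "y \<in> K" for y
  proof
    assume pos: "\<forall>l. inner (F l x) (x - y) > 0"
    have "(\<Sum>l\<in>UNIV. \<xi> $ l) \<noteq> 0" using assms by (simp add: Delta_def)
    then obtain l0 where "\<xi> $ l0 \<noteq> 0" by (meson sum.neutral)
    with assms have l0: "\<xi> $ l0 > 0" by (simp add: Delta_def order_less_le)
    have "0 < (\<Sum>l\<in>UNIV. \<xi> $ l * inner (F l x) (x - y))"
      using assms l0 pos by (intro sum_pos2[of UNIV l0]) (auto simp: Delta_def less_imp_le)
    also have "\<dots> = inner (Fxi F \<xi> x) (x - y)"
      unfolding Fxi_def by (simp add: inner_sum_left)
    finally have "inner (Fxi F \<xi> x) (y - x) < 0"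
      by (simp add: inner_diff_right)
    moreover have "inner (Fxi F \<xi> x) (y - x) \<ge> 0"
      using x y by (simp add: basicS_def VI_Sol_def)
    ultimately show False by simp
  qed
  with x show "x \<in> Sol_w F K" by (simp add: Sol_w_def basicS_def VI_Sol_def)
qed

lemma closed_basicS_graph:
  assumes "closed K" and "\<And>l. continuous_on K (F l)"
  shows "closed {p. snd p \<in> basicS F K (fst p)}"
proof -
  define f where "f y p = inner (Fxi F (fst p) (snd p)) (y - snd p)" for y p
  have "continuous_on (UNIV \<times> K) (f y)" for y
    unfolding f_def by (intro continuous_intros continuous_on_Fxi_joint[OF assms(2)]) auto
  then have "closed (\<Inter>y\<in>K. (UNIV \<times> K) \<inter> f y -` {0..})"
    by (intro closed_INT ballI continuous_closed_preimage closed_Times assms(1)) auto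
  moreover have "{p. snd p \<in> basicS F K (fst p)} = (UNIV \<times> K) \<inter> (\<Inter>y\<in>K. (UNIV \<times> K) \<inter> f y -` {0..})"
    by (auto simp: basicS_def VI_Sol_def f_def)
  ultimately show ?thesis by (simp add: closed_Int closed_Times assms(1))
qed

lemma basicS_upper_semicontinuous:
  assumes "compact K" and "\<And>l. continuous_on K (F l)" and "open N" and "basicS F K \<xi>0 \<subseteq> N"
  obtains \<delta> where "\<delta> > 0" and "\<And>\<xi>. dist \<xi>0 \<xi> < \<delta> \<Longrightarrow> basicS F K \<xi> \<subseteq> N"
proof -
  define E where "E = {p. snd p \<in> basicS F K (fst p)} \<inter> (cball \<xi>0 1 \<times> (K - N))"
  have "compact E"
    unfolding E_def using assms
    by (intro closed_Int_compact closed_basicS_graph compact_Times compact_cball compact_diff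
        compact_imp_closed)
  then have "open (- fst ` E)"
    by (intro open_Compl compact_imp_closed compact_continuous_image continuous_on_fst continuous_on_id)
  moreover have "\<xi>0 \<in> - fst ` E"
    using assms(4) by (auto simp: E_def)
  ultimately obtain e where e: "e > 0" "ball \<xi>0 e \<subseteq> - fst ` E"
    using open_contains_ball by metis
  show ?thesis
  proof
    show "min 1 e > 0" using e by simp
    fix \<xi> assume \<xi>: "dist \<xi>0 \<xi> < min 1 e"
    show "basicS F K \<xi> \<subseteq> N"
    proof
      fix z assume z: "z \<in> basicS F K \<xi>"
      from \<xi> e have "\<xi> \<notin> fst ` E" by auto
      then have "(\<xi>, z) \<notin> E" by (metis fst_conv image_eqI)
      moreover have "z \<in> K" using z by (simp add: basicS_def VI_Sol_def)
      ultimately show "z \<in> N" using \<xi> z by (simp add: E_def dist_commute)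
    qed
  qed
qed

lemma basicS_Int_cball_imp_basicS:
  assumes "convex K" and "z \<in> basicS F (K \<inter> cball a R) \<xi>" and "dist a z < R"
  shows "z \<in> basicS F K \<xi>"
proof -
  have z: "z \<in> K" "\<forall>y\<in>K \<inter> cball a R. inner (Fxi F \<xi> z) (y - z) \<ge> 0"
    using assms(2) by (simp_all add: basicS_def VI_Sol_def)
  then have "\<forall>y\<in>K. inner (Fxi F \<xi> z) (y - z) \<ge> 0"
    using assms(3) by (intro variational_inequality_local_to_global[OF assms(1)])
  with z(1) show ?thesis by (simp add: basicS_def VI_Sol_def)
qed

text \<open>If \<open>a \<in> S(\<xi>) \<subseteq> ball a r\<close>, truncating \<open>K\<close> to \<open>cball a (2r)\<close> creates no spurious solutions:
  a truncated solution \<open>z\<close> on the sphere would make \<open>a + 3/4 (z - a)\<close>, at distance \<open>3r/2\<close>, a genuine one.\<close>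

lemma basicS_truncation_subset_ball:
  assumes K: "convex K" and F_cont: "\<And>l. continuous_on K (F l)"
    and F_mono: "\<And>l. monotone_on_K K (F l)" and \<xi>: "\<And>l. \<xi> $ l \<ge> 0"
    and a: "a \<in> basicS F K \<xi>" and S: "basicS F K \<xi> \<subseteq> ball a r"
  shows "basicS F (K \<inter> cball a (2 * r)) \<xi> \<subseteq> ball a r"
proof
  fix z assume z: "z \<in> basicS F (K \<inter> cball a (2 * r)) \<xi>"
  have "a \<in> ball a r" using a S by blast
  then have r: "r > 0" by simp
  have trunc: "dist a y < 2 * r \<Longrightarrow> y \<in> basicS F (K \<inter> cball a (2 * r)) \<xi> \<Longrightarrow> y \<in> ball a r" for y
    using S basicS_Int_cball_imp_basicS[OF K, where z = y and R = "2 * r"] by blast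
  show "z \<in> ball a r"
  proof (cases "dist a z < 2 * r")
    case False
    with z have dz: "dist a z = 2 * r" by (simp add: basicS_def VI_Sol_def)
    have "continuous_on (K \<inter> cball a (2 * r)) (F l)" "monotone_on_K (K \<inter> cball a (2 * r)) (F l)" for l
      using continuous_on_subset[OF F_cont] monotone_on_K_subset[OF F_mono] by blast+
    then have "convex (basicS F (K \<inter> cball a (2 * r)) \<xi>)"
      using \<xi> by (intro convex_basicS convex_Int K convex_cball)
    moreover have "a \<in> basicS F (K \<inter> cball a (2 * r)) \<xi>"
      using a r by (simp add: basicS_def VI_Sol_def)
    ultimately have w: "(1/4) *\<^sub>R a + (3/4) *\<^sub>R z \<in> basicS F (K \<inter> cball a (2 * r)) \<xi>"
      using z by (intro convexD) auto
    have "a - ((1/4) *\<^sub>R a + (3/4) *\<^sub>R z) = (3/4) *\<^sub>R (a - z)"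
      by (simp add: algebra_simps flip: scaleR_add_left)
    hence "dist a ((1/4) *\<^sub>R a + (3/4) *\<^sub>R z) = 3/2 * r"
      using dz by (simp add: dist_norm)
    with trunc[OF _ w] r show ?thesis by simp
  qed (use trunc z in blast)
qed

lemma connected_if_convex_fibres:
  fixes \<Gamma> :: "('a::t2_space \<times> 'b::real_normed_vector) set"
  assumes "compact \<Gamma>" and "connected (fst ` \<Gamma>)" and "\<And>\<xi>. convex {z. (\<xi>, z) \<in> \<Gamma>}"
  shows "connected \<Gamma>"
proof -
  have "connected (\<Gamma> \<inter> fst -` fst ` \<Gamma>)"
  proof (rule connected_closed_monotone_preimage[OF continuous_on_fst[OF continuous_on_id] refl])
    fix C assume C: "closedin (top_of_set \<Gamma>) C"
    then have "compact C"
      using assms(1) closedin_compact by blast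
    then show "closedin (top_of_set (fst ` \<Gamma>)) (fst ` C)"
      using closedin_imp_subset[OF C]
      by (intro closed_subset compact_imp_closed compact_continuous_image continuous_on_fst
          continuous_on_id) auto
  next
    fix \<xi> assume "\<xi> \<in> fst ` \<Gamma>"
    have "\<Gamma> \<inter> fst -` {\<xi>} = {\<xi>} \<times> {z. (\<xi>, z) \<in> \<Gamma>}" by auto
    then show "connected (\<Gamma> \<inter> fst -` {\<xi>})"
      using assms(3) by (simp add: connected_Times convex_connected)
  qed (use assms(2) in auto)
  moreover have "\<Gamma> \<inter> fst -` fst ` \<Gamma> = \<Gamma>" by auto
  ultimately show ?thesis by simp
qed

lemma connected_solutions_near_parameter:
  fixes K :: "(real^'n) set" and F :: "'m::finite \<Rightarrow> real^'n \<Rightarrow> real^'n"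
  assumes K: "closed K" "convex K"
    and F_cont: "\<And>l. continuous_on K (F l)" and F_mono: "\<And>l. monotone_on_K K (F l)"
    and \<xi>0: "\<xi>0 \<in> Delta" and ne: "basicS F K \<xi>0 \<noteq> {}" and bd: "bounded (basicS F K \<xi>0)"
  obtains \<delta> where "\<delta> > 0"
    and "\<And>V. V \<subseteq> Delta \<inter> cball \<xi>0 \<delta> \<Longrightarrow> compact V \<Longrightarrow> connected V \<Longrightarrow>
           \<exists>W. connected W \<and> W \<subseteq> (\<Union>\<xi>\<in>V. basicS F K \<xi>) \<and> (\<forall>\<xi>\<in>V. basicS F K \<xi> \<inter> W \<noteq> {})"
proof -
  obtain a where a: "a \<in> basicS F K \<xi>0" using ne by auto
  obtain r where r: "basicS F K \<xi>0 \<subseteq> ball a r" using bounded_subset_ballD[OF bd] by auto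
  have "r > 0" using a r by force
  define KR where "KR = K \<inter> cball a (2 * r)"
  have "a \<in> KR" using a \<open>r > 0\<close> by (simp add: KR_def basicS_def VI_Sol_def)
  then have KR: "compact KR" "convex KR" "KR \<noteq> {}"
    unfolding KR_def by (auto intro!: closed_Int_compact K compact_cball convex_Int convex_cball)
  have F_cont_KR: "continuous_on KR (F l)" for l
    using F_cont by (rule continuous_on_subset) (simp add: KR_def)
  have nonneg: "\<xi> \<in> Delta \<Longrightarrow> \<xi> $ l \<ge> 0" for \<xi> :: "real^'m" and l by (simp add: Delta_def)
  have "basicS F KR \<xi>0 \<subseteq> ball a r"
    unfolding KR_def by (rule basicS_truncation_subset_ball[OF K(2) F_cont F_mono nonneg[OF \<xi>0] a r])
  also have "ball a r \<subseteq> ball a (2 * r)" using \<open>r > 0\<close> by (simp add: subset_ball)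
  finally have "basicS F KR \<xi>0 \<subseteq> ball a (2 * r)" .
  then obtain \<delta> where \<delta>: "\<delta> > 0" "\<And>\<xi>. dist \<xi>0 \<xi> < \<delta> \<Longrightarrow> basicS F KR \<xi> \<subseteq> ball a (2 * r)"
    using basicS_upper_semicontinuous[of KR F, OF KR(1) F_cont_KR open_ball] by blast
  have genuine: "basicS F KR \<xi> \<subseteq> basicS F K \<xi>" if "dist \<xi>0 \<xi> < \<delta>" for \<xi>
  proof
    fix z assume z: "z \<in> basicS F KR \<xi>"
    with \<delta>(2)[OF that] have "dist a z < 2 * r" by auto
    with z show "z \<in> basicS F K \<xi>" unfolding KR_def by (rule basicS_Int_cball_imp_basicS[OF K(2)])
  qed
  have solvable: "basicS F KR \<xi> \<noteq> {}" for \<xi>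
    by (rule basicS_nonempty[of KR F, OF KR F_cont_KR])
  have F_mono_KR: "monotone_on_K KR (F l)" for l
    using F_mono by (rule monotone_on_K_subset) (simp add: KR_def)
  show ?thesis
  proof (rule that[of "\<delta> / 2"])
    fix V assume V: "V \<subseteq> Delta \<inter> cball \<xi>0 (\<delta> / 2)" "compact V" "connected V"
    have near: "dist \<xi>0 \<xi> < \<delta>" if "\<xi> \<in> V" for \<xi>
      using that V(1) \<delta>(1) by auto
    define \<Gamma> where "\<Gamma> = {p. snd p \<in> basicS F KR (fst p)} \<inter> (V \<times> KR)"
    have \<Gamma>_iff: "(\<xi>, z) \<in> \<Gamma> \<longleftrightarrow> \<xi> \<in> V \<and> z \<in> basicS F KR \<xi>" for \<xi> z
      by (auto simp: \<Gamma>_def basicS_def VI_Sol_def)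
    have "connected \<Gamma>"
    proof (rule connected_if_convex_fibres)
      show "compact \<Gamma>" unfolding \<Gamma>_def
        using K(1) F_cont_KR KR(1) V(2)
        by (intro closed_Int_compact closed_basicS_graph compact_Times compact_imp_closed)
      have "fst ` \<Gamma> = V"
      proof
        show "fst ` \<Gamma> \<subseteq> V" by (auto simp: \<Gamma>_def)
        show "V \<subseteq> fst ` \<Gamma>"
        proof
          fix \<xi> assume "\<xi> \<in> V"
          obtain z where "z \<in> basicS F KR \<xi>" using solvable by blast
          with \<open>\<xi> \<in> V\<close> have "(\<xi>, z) \<in> \<Gamma>" by (simp add: \<Gamma>_iff)
          then show "\<xi> \<in> fst ` \<Gamma>" by (metis fst_conv image_eqI)
        qed
      qed
      then show "connected (fst ` \<Gamma>)" using V(3) by simp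
      show "convex {z. (\<xi>, z) \<in> \<Gamma>}" for \<xi>
      proof (cases "\<xi> \<in> V")
        case True
        with V(1) have "\<And>l. \<xi> $ l \<ge> 0" by (auto simp: Delta_def)
        then have "convex (basicS F KR \<xi>)" by (rule convex_basicS[OF KR(2) F_cont_KR F_mono_KR])
        with True show ?thesis by (simp add: \<Gamma>_iff)
      qed (simp add: \<Gamma>_iff)
    qed
    then have "connected (snd ` \<Gamma>)"
      by (rule connected_continuous_image[OF continuous_on_snd[OF continuous_on_id]])
    moreover have "basicS F K \<xi> \<inter> snd ` \<Gamma> \<noteq> {}" if "\<xi> \<in> V" for \<xi>
    proof -
      obtain z where z: "z \<in> basicS F KR \<xi>" using solvable by blast
      with that have "(\<xi>, z) \<in> \<Gamma>" by (simp add: \<Gamma>_iff)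
      then have "z \<in> snd ` \<Gamma>" by (metis snd_conv image_eqI)
      moreover have "z \<in> basicS F K \<xi>" using genuine[OF near[OF that]] z by blast
      ultimately show ?thesis by blast
    qed
    moreover have "snd ` \<Gamma> \<subseteq> (\<Union>\<xi>\<in>V. basicS F K \<xi>)"
    proof
      fix z assume "z \<in> snd ` \<Gamma>"
      then obtain \<xi> where "(\<xi>, z) \<in> \<Gamma>" by force
      then have "\<xi> \<in> V" "z \<in> basicS F KR \<xi>" by (simp_all add: \<Gamma>_iff)
      with genuine[OF near] show "z \<in> (\<Union>\<xi>\<in>V. basicS F K \<xi>)" by blast
    qed
    ultimately show "\<exists>W. connected W \<and> W \<subseteq> (\<Union>\<xi>\<in>V. basicS F K \<xi>) \<and> (\<forall>\<xi>\<in>V. basicS F K \<xi> \<inter> W \<noteq> {})"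
      by blast
  qed (use \<delta> in simp)
qed

lemma connected_subset_connected_component:
  assumes "connected W" "W \<subseteq> U" "W \<inter> connected_component_set U x \<noteq> {}"
  shows "W \<subseteq> connected_component_set U x"
  using assms connected_component_maximal connected_component_eq by blast

lemma openin_basicS_meets_component:
  fixes K :: "(real^'n) set" and F :: "'m::finite \<Rightarrow> real^'n \<Rightarrow> real^'n"
  assumes K: "closed K" "convex K"
    and F_cont: "\<And>l. continuous_on K (F l)" and F_mono: "\<And>l. monotone_on_K K (F l)"
    and D: "openin (top_of_set Delta) D" and U: "\<And>\<xi>. \<xi> \<in> D \<Longrightarrow> basicS F K \<xi> \<subseteq> U"
    and A: "A = connected_component_set U x" "bounded A"
  shows "openin (top_of_set D) {\<xi>\<in>D. basicS F K \<xi> \<inter> A \<noteq> {}}"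
  unfolding openin_euclidean_subtopology_iff
proof (intro conjI ballI)
  fix \<xi>0 assume "\<xi>0 \<in> {\<xi>\<in>D. basicS F K \<xi> \<inter> A \<noteq> {}}"
  then have \<xi>0: "\<xi>0 \<in> D" "basicS F K \<xi>0 \<inter> A \<noteq> {}" by auto
  have D_Delta: "D \<subseteq> Delta" using D by (rule openin_imp_subset)
  have "connected (basicS F K \<xi>0)"
    using \<xi>0(1) D_Delta
    by (intro convex_connected convex_basicS K(2) F_cont F_mono) (auto simp: Delta_def)
  then have S0A: "basicS F K \<xi>0 \<subseteq> A"
    unfolding A(1) by (rule connected_subset_connected_component) (use U \<xi>0 A(1) in auto)
  obtain \<delta> where \<delta>: "\<delta> > 0"
    and link: "\<And>V. V \<subseteq> Delta \<inter> cball \<xi>0 \<delta> \<Longrightarrow> compact V \<Longrightarrow> connected V \<Longrightarrow>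
           \<exists>W. connected W \<and> W \<subseteq> (\<Union>\<xi>\<in>V. basicS F K \<xi>) \<and> (\<forall>\<xi>\<in>V. basicS F K \<xi> \<inter> W \<noteq> {})"
  proof (rule connected_solutions_near_parameter[OF K F_cont F_mono])
    show "\<xi>0 \<in> Delta" using \<xi>0(1) D_Delta by blast
    show "basicS F K \<xi>0 \<noteq> {}" using \<xi>0(2) by blast
    show "bounded (basicS F K \<xi>0)" using A(2) S0A by (rule bounded_subset)
  qed (rule that)
  obtain \<epsilon> where \<epsilon>: "\<epsilon> > 0" "\<And>\<xi>. \<xi> \<in> Delta \<Longrightarrow> dist \<xi> \<xi>0 < \<epsilon> \<Longrightarrow> \<xi> \<in> D"
    using D \<xi>0(1) unfolding openin_euclidean_subtopology_iff by blast
  define e where "e = min \<delta> (\<epsilon> / 2)"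
  define V where "V = Delta \<inter> cball \<xi>0 e"
  have VD: "V \<subseteq> D"
  proof
    fix \<xi> assume "\<xi> \<in> V"
    then have "\<xi> \<in> Delta" "dist \<xi> \<xi>0 < \<epsilon>" using \<epsilon>(1) by (auto simp: V_def e_def dist_commute)
    then show "\<xi> \<in> D" by (rule \<epsilon>(2))
  qed
  have "V \<subseteq> Delta \<inter> cball \<xi>0 \<delta>" by (auto simp: V_def e_def)
  moreover have "compact V" unfolding V_def by (intro compact_Int_closed compact_Delta closed_cball)
  moreover have "connected V" unfolding V_def by (intro convex_connected convex_Int convex_Delta convex_cball)
  ultimately have "\<exists>W. connected W \<and> W \<subseteq> (\<Union>\<xi>\<in>V. basicS F K \<xi>) \<and> (\<forall>\<xi>\<in>V. basicS F K \<xi> \<inter> W \<noteq> {})"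
    by (rule link)
  then obtain W where W: "connected W" "W \<subseteq> (\<Union>\<xi>\<in>V. basicS F K \<xi>)" "\<forall>\<xi>\<in>V. basicS F K \<xi> \<inter> W \<noteq> {}"
    by blast
  have "\<xi>0 \<in> V" using \<xi>0(1) D_Delta \<delta> \<epsilon>(1) by (auto simp: V_def e_def)
  then have "W \<inter> A \<noteq> {}" using W(3) S0A by blast
  moreover have "W \<subseteq> U" using W(2) VD U by blast
  ultimately have WA: "W \<subseteq> A"
    unfolding A(1) using connected_subset_connected_component[OF W(1)] by blast
  show "\<exists>e>0. \<forall>\<xi>\<in>D. dist \<xi> \<xi>0 < e \<longrightarrow> \<xi> \<in> {\<xi>\<in>D. basicS F K \<xi> \<inter> A \<noteq> {}}"
  proof (intro exI[of _ e] conjI ballI impI)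
    show "e > 0" using \<delta> \<epsilon> by (simp add: e_def)
    fix \<xi> assume "\<xi> \<in> D" "dist \<xi> \<xi>0 < e"
    with D_Delta have "\<xi> \<in> V" by (auto simp: V_def dist_commute)
    with \<open>\<xi> \<in> D\<close> W(3) WA show "\<xi> \<in> {\<xi>\<in>D. basicS F K \<xi> \<inter> A \<noteq> {}}" by blast
  qed
qed auto

theorem proposition3:
  fixes K :: "(real^'n) set" and F :: "'m::finite \<Rightarrow> real^'n \<Rightarrow> real^'n"
  assumes K_ne: "K \<noteq> {}" and K_closed: "closed K" and K_convex: "convex K"
    and F_cont: "\<And>l. continuous_on K (F l)"
    and F_mono: "\<And>l. monotone_on_K K (F l)"
  shows
    "(\<forall>A x. x \<in> Sol_w F K \<longrightarrow> A = connected_component_set (Sol_w F K) x \<longrightarrow> bounded A \<longrightarrow>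
        openin (top_of_set (Delta :: (real^'m) set))
          {\<xi>\<in>Delta. basicS F K \<xi> \<inter> A \<noteq> {}})
   \<and> (\<forall>A x. x \<in> Sol_pr F K \<longrightarrow> A = connected_component_set (Sol_pr F K) x \<longrightarrow> bounded A \<longrightarrow>
        openin (top_of_set (ri_Delta :: (real^'m) set))
          {\<xi>\<in>ri_Delta. basicS F K \<xi> \<inter> A \<noteq> {}})"
proof (intro conjI allI impI)
  fix A x
  assume "A = connected_component_set (Sol_w F K) x" "bounded A"
  then show "openin (top_of_set (Delta :: (real^'m) set)) {\<xi>\<in>Delta. basicS F K \<xi> \<inter> A \<noteq> {}}"
    using basicS_subset_Sol_w
    by (intro openin_basicS_meets_component[OF K_closed K_convex F_cont F_mono
          openin_subtopology_self])
next
  fix A x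
  assume "A = connected_component_set (Sol_pr F K) x" "bounded A"
  moreover have "basicS F K \<xi> \<subseteq> Sol_pr F K" if "\<xi> \<in> ri_Delta" for \<xi>
    using that unfolding Sol_pr_def basicS_def by blast
  ultimately show "openin (top_of_set (ri_Delta :: (real^'m) set)) {\<xi>\<in>ri_Delta. basicS F K \<xi> \<inter> A \<noteq> {}}"
    by (intro openin_basicS_meets_component[OF K_closed K_convex F_cont F_mono openin_ri_Delta])
qed

end
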